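(* Let $A,B \in\mathbb{R}^{m\times n}$ and $b\in\mathbb{R}^m$ with $\operatorname{rank}(B) = m$ and $m<n$. If $B^\dagger b < 0$ and $\|B^\dagger A\|_\infty < \gamma/2$, where $\gamma = \dfrac{\min_i|(B^\dagger b)_i|}{\max_i|(B^\dagger b)_i|}$, then for every sign pattern $s\in\{1,-1\}^n$ the equation $Ax-B|x|=b$ has infinitely many solutions with sign pattern $s$.
   Context: $B^\dagger$ is the Moore–Penrose inverse; $|x|$ is the entrywise absolute value; vector inequalities are entrywise; $\|\cdot\|_\infty$ on matrices is the operator norm induced by the vector $\infty$-norm. A vector $x$ has sign pattern $s$ if $\operatorname{sign}(x_{(i)})=s_{(i)}$ for all $i$. *)

theory Defs
  imports "HOL-Analysis.Analysis"
begin

definition is_moore_penrose :: "real^'m^'n \<Rightarrow> real^'n^'m \<Rightarrow> bool" where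
  "is_moore_penrose X B \<longleftrightarrow>
     B ** X ** B = B \<and> X ** B ** X = X \<and>
     transpose (B ** X) = B ** X \<and> transpose (X ** B) = X ** B"

definition pinv :: "real^'n^'m \<Rightarrow> real^'m^'n" where
  "pinv B = (THE X. is_moore_penrose X B)"

definition vec_inf_norm :: "real^'n \<Rightarrow> real" where
  "vec_inf_norm x = Max (range (\<lambda>i. \<bar>x $ i\<bar>))"

definition mat_inf_norm :: "real^'n^'m \<Rightarrow> real" where
  "mat_inf_norm M = Sup {vec_inf_norm (M *v x) | x. vec_inf_norm x \<le> 1}"

definition vec_abs :: "real^'n \<Rightarrow> real^'n" where
  "vec_abs x = (\<chi> i. \<bar>x $ i\<bar>)"

end

theory Submission
  imports Defs
begin

text \<open>
  Write \<open>P = B\<^sup>\<dagger>\<close>, so that \<open>B P = I\<close>, and \<open>p = P b < 0\<close>. For a sign vector \<open>s\<close> and \<open>y > 0\<close>,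
  the vector \<open>x = s * y\<close> has sign pattern \<open>s\<close> and \<open>|x| = y\<close>; it solves \<open>A x - B |x| = b\<close>
  as soon as \<open>y = P A x - p + t h\<close> for some \<open>h\<close> in the kernel of \<open>B\<close>, which is nontrivial
  since \<open>m < n\<close>. Because \<open>\<parallel>P A\<parallel>\<^sub>\<infinity> < 1\<close>, the map \<open>y \<mapsto> y - P A (s * y)\<close> is invertible and
  its solution of \<open>y - P A (s * y) = q\<close> satisfies \<open>(1 - \<parallel>P A\<parallel>\<^sub>\<infinity>) \<parallel>y\<parallel>\<^sub>\<infinity> \<le> \<parallel>q\<parallel>\<^sub>\<infinity>\<close>.
  The hypothesis \<open>\<parallel>P A\<parallel>\<^sub>\<infinity> < \<gamma>/2\<close> makes this bound strong enough to force \<open>y > 0\<close> for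
  \<open>q = t h - p\<close> with all sufficiently small \<open>t > 0\<close>, and distinct \<open>t\<close> give distinct \<open>x\<close>.
\<close>

lemma abs_component_le_vec_inf_norm: "\<bar>x $ i\<bar> \<le> vec_inf_norm x"
  unfolding vec_inf_norm_def by (rule Max_ge) auto

lemma vec_inf_norm_le: "(\<And>i. \<bar>x $ i\<bar> \<le> c) \<Longrightarrow> vec_inf_norm x \<le> c"
  unfolding vec_inf_norm_def by (subst Max_le_iff) auto

lemma vec_inf_norm_nonneg: "0 \<le> vec_inf_norm x"
  using abs_component_le_vec_inf_norm[of x] abs_ge_zero order_trans by blast

lemma vec_inf_norm_eq_0_iff: "vec_inf_norm x = 0 \<longleftrightarrow> x = 0"
proof
  assume "vec_inf_norm x = 0"
  then show "x = 0"
    using abs_component_le_vec_inf_norm[of x] by (metis abs_le_zero_iff vec_eq_iff zero_index)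
next
  assume "x = 0"
  then show "vec_inf_norm x = 0"
    using vec_inf_norm_le[of x 0] vec_inf_norm_nonneg[of x] by simp
qed

lemma vec_inf_norm_zero [simp]: "vec_inf_norm 0 = 0"
  by (simp add: vec_inf_norm_eq_0_iff)

lemma vec_inf_norm_pos: "x \<noteq> 0 \<Longrightarrow> 0 < vec_inf_norm x"
  using vec_inf_norm_eq_0_iff vec_inf_norm_nonneg by (metis less_eq_real_def)

lemma vec_inf_norm_scaleR: "vec_inf_norm (t *\<^sub>R x) = \<bar>t\<bar> * vec_inf_norm x"
proof (rule antisym)
  show "vec_inf_norm (t *\<^sub>R x) \<le> \<bar>t\<bar> * vec_inf_norm x"
    by (rule vec_inf_norm_le) (simp add: abs_mult mult_left_mono abs_component_le_vec_inf_norm)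
  have "vec_inf_norm x \<in> range (\<lambda>i. \<bar>x $ i\<bar>)"
    unfolding vec_inf_norm_def by (rule Max_in) auto
  then obtain i where "vec_inf_norm x = \<bar>x $ i\<bar>" by blast
  then show "\<bar>t\<bar> * vec_inf_norm x \<le> vec_inf_norm (t *\<^sub>R x)"
    using abs_component_le_vec_inf_norm[of "t *\<^sub>R x" i] by (simp add: abs_mult)
qed

lemma vec_inf_norm_mult_le:
  "(\<And>i. \<bar>s $ i\<bar> \<le> 1) \<Longrightarrow> vec_inf_norm (s * y) \<le> vec_inf_norm y"
proof (rule vec_inf_norm_le)
  fix i
  assume "\<And>i. \<bar>s $ i\<bar> \<le> 1"
  then have "\<bar>s $ i\<bar> * \<bar>y $ i\<bar> \<le> \<bar>y $ i\<bar>"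
    by (simp add: mult_left_le_one_le)
  then show "\<bar>(s * y) $ i\<bar> \<le> vec_inf_norm y"
    using abs_component_le_vec_inf_norm[of y i] by (simp add: abs_mult)
qed

lemma bdd_above_mat_inf_norm_set: "bdd_above {vec_inf_norm (M *v x) | x. vec_inf_norm x \<le> 1}"
proof (rule bdd_aboveI)
  fix r assume "r \<in> {vec_inf_norm (M *v x) | x. vec_inf_norm x \<le> 1}"
  then obtain x where r: "r = vec_inf_norm (M *v x)" and x: "vec_inf_norm x \<le> 1" by auto
  have "\<bar>(M *v x) $ i\<bar> \<le> (\<Sum>k\<in>UNIV. \<Sum>j\<in>UNIV. \<bar>M $ k $ j\<bar>)" for i
  proof -
    have "\<bar>(M *v x) $ i\<bar> \<le> (\<Sum>j\<in>UNIV. \<bar>M $ i $ j\<bar> * \<bar>x $ j\<bar>)"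
      unfolding matrix_vector_mult_def by (simp flip: abs_mult)
    also have "\<dots> \<le> (\<Sum>j\<in>UNIV. \<bar>M $ i $ j\<bar>)"
      using order_trans[OF abs_component_le_vec_inf_norm x]
      by (intro sum_mono) (simp add: mult_left_le)
    also have "\<dots> \<le> (\<Sum>k\<in>UNIV. \<Sum>j\<in>UNIV. \<bar>M $ k $ j\<bar>)"
      by (rule member_le_sum) (auto intro: sum_nonneg)
    finally show ?thesis .
  qed
  then show "r \<le> (\<Sum>k\<in>UNIV. \<Sum>j\<in>UNIV. \<bar>M $ k $ j\<bar>)"
    unfolding r by (rule vec_inf_norm_le)
qed

lemma mat_inf_norm_nonneg: "0 \<le> mat_inf_norm M"
  unfolding mat_inf_norm_def
proof (rule cSup_upper2[of "vec_inf_norm (M *v 0)"])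
  show "vec_inf_norm (M *v 0) \<in> {vec_inf_norm (M *v x) |x. vec_inf_norm x \<le> 1}"
    by (intro CollectI exI[of _ 0]) simp
qed (auto simp: vec_inf_norm_nonneg bdd_above_mat_inf_norm_set)

lemma vec_inf_norm_mat_vec_le: "vec_inf_norm (M *v v) \<le> mat_inf_norm M * vec_inf_norm v"
proof (cases "v = 0")
  case False
  define r where "r = vec_inf_norm v"
  have r: "0 < r" using False by (simp add: r_def vec_inf_norm_pos)
  have "vec_inf_norm ((1 / r) *\<^sub>R v) \<le> 1"
    using r by (simp add: vec_inf_norm_scaleR r_def)
  then have "vec_inf_norm (M *v ((1 / r) *\<^sub>R v)) \<le> mat_inf_norm M"
    unfolding mat_inf_norm_def by (intro cSup_upper[OF _ bdd_above_mat_inf_norm_set]) auto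
  then have "vec_inf_norm (M *v v) / r \<le> mat_inf_norm M"
    using r by (simp add: matrix_vector_mult_scaleR vec_inf_norm_scaleR)
  then show ?thesis using r by (simp add: r_def pos_divide_le_eq)
qed simp

lemma is_moore_penrose_unique:
  fixes B :: "real^'n^'m"
  assumes X: "is_moore_penrose X B" and Y: "is_moore_penrose Y B"
  shows "X = Y"
proof -
  have X1: "B ** X ** B = B" and X2: "X ** B ** X = X" and X3: "transpose (B ** X) = B ** X"
    and X4: "transpose (X ** B) = X ** B" using X by (auto simp: is_moore_penrose_def)
  have Y1: "B ** Y ** B = B" and Y2: "Y ** B ** Y = Y" and Y3: "transpose (B ** Y) = B ** Y"
    and Y4: "transpose (Y ** B) = Y ** B" using Y by (auto simp: is_moore_penrose_def)
  have "X = X ** transpose (B ** X)" using X2 X3 by (simp add: matrix_mul_assoc)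
  also have "\<dots> = X ** (transpose (B ** X) ** transpose (B ** Y))"
    using Y1 by (metis matrix_transpose_mul matrix_mul_assoc)
  also have "\<dots> = X ** B ** Y" using X2 X3 Y3 by (simp add: matrix_mul_assoc)
  finally have XBY: "X = X ** B ** Y" .
  have "Y = transpose (Y ** B) ** Y" using Y2 Y4 by simp
  also have "\<dots> = (transpose (X ** B) ** transpose (Y ** B)) ** Y"
    using X1 by (metis matrix_transpose_mul matrix_mul_assoc)
  also have "\<dots> = X ** B ** (Y ** B ** Y)" using X4 Y4 by (simp add: matrix_mul_assoc)
  also have "\<dots> = X ** B ** Y" using Y2 by simp
  finally show ?thesis using XBY by simp
qed

lemma full_row_rank_right_inverse:
  fixes B :: "real^'n^'m"
  assumes "rank B = CARD('m)"
  obtains X where "B ** X = mat 1" and "transpose (X ** B) = X ** B"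
proof -
  define K where "K = B ** transpose B"
  have inj_transpose: "inj ((*v) (transpose B))"
    using assms full_rank_injective[of "transpose B"] rank_transpose[of B] by simp
  have "inj ((*v) K)"
  proof (rule linear_injective_0[THEN iffD2, OF matrix_vector_mul_linear], intro allI impI)
    fix u assume "K *v u = 0"
    have "inner (transpose B *v u) (transpose B *v u) = inner u (K *v u)"
      by (simp add: K_def dot_lmul_matrix matrix_vector_mul_assoc[symmetric])
    then have "transpose B *v u = transpose B *v 0" using \<open>K *v u = 0\<close> by simp
    then show "u = 0" by (rule injD[OF inj_transpose])
  qed
  then obtain G where "G ** K = mat 1" using matrix_left_invertible_injective by blast
  then have KG: "K ** G = mat 1" using matrix_left_right_inverse by blast
  have "transpose G ** K = transpose (K ** G)"
    by (simp add: K_def matrix_transpose_mul)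
  then have GtK: "transpose G ** K = mat 1" using KG by simp
  have G_sym: "transpose G = G"
  proof -
    have "transpose G = (transpose G ** K) ** G" using KG by (simp flip: matrix_mul_assoc)
    then show ?thesis using GtK by simp
  qed
  show ?thesis
  proof
    show "B ** (transpose B ** G) = mat 1" using KG by (simp add: K_def matrix_mul_assoc)
    show "transpose (transpose B ** G ** B) = transpose B ** G ** B"
      by (simp add: matrix_transpose_mul G_sym matrix_mul_assoc)
  qed
qed

lemma pinv_right_inverse:
  fixes B :: "real^'n^'m"
  assumes "rank B = CARD('m)"
  shows "B ** pinv B = mat 1"
proof -
  obtain X where BX: "B ** X = mat 1" and XB: "transpose (X ** B) = X ** B"
    using full_row_rank_right_inverse[OF assms] .
  have "X ** B ** X = X" using BX by (simp flip: matrix_mul_assoc)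
  then have "is_moore_penrose X B"
    unfolding is_moore_penrose_def using BX XB by simp
  then have "pinv B = X"
    unfolding pinv_def using is_moore_penrose_unique by blast
  then show ?thesis using BX by simp
qed

lemma vec_inf_norm_mat_vec_mult_le:
  "(\<And>i. \<bar>s $ i\<bar> \<le> 1) \<Longrightarrow> vec_inf_norm (N *v (s * y)) \<le> mat_inf_norm N * vec_inf_norm y"
  using vec_inf_norm_mat_vec_le[of N "s * y"] vec_inf_norm_mult_le[of s y] mat_inf_norm_nonneg[of N]
  by (meson mult_left_mono order_trans)

lemma vec_inf_norm_fixed_point_le:
  assumes y: "y = N *v (s * y) + q" and s: "\<And>i. \<bar>s $ i\<bar> \<le> 1"
  shows "(1 - mat_inf_norm N) * vec_inf_norm y \<le> vec_inf_norm q"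
proof -
  have "\<bar>y $ i\<bar> \<le> mat_inf_norm N * vec_inf_norm y + vec_inf_norm q" for i
  proof -
    have "\<bar>y $ i\<bar> \<le> \<bar>(N *v (s * y)) $ i\<bar> + \<bar>q $ i\<bar>"
      using arg_cong[OF y, of "\<lambda>v. v $ i"] by (simp add: abs_triangle_ineq)
    then show ?thesis
      using abs_component_le_vec_inf_norm[of "N *v (s * y)" i] abs_component_le_vec_inf_norm[of q i]
        vec_inf_norm_mat_vec_mult_le[OF s, of N y] by linarith
  qed
  then have "vec_inf_norm y \<le> mat_inf_norm N * vec_inf_norm y + vec_inf_norm q"
    by (rule vec_inf_norm_le)
  then show ?thesis by (simp add: algebra_simps)
qed

lemma surj_id_minus_contraction:
  assumes c: "mat_inf_norm N < 1" and s: "\<And>i. \<bar>s $ i\<bar> \<le> 1"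
  shows "surj (\<lambda>y. y - N *v (s * y))"
proof (rule linear_injective_imp_surjective)
  show lin: "linear (\<lambda>y. y - N *v (s * y))"
    by (auto intro!: linearI simp: vec_eq_iff algebra_simps)
  show "inj (\<lambda>y. y - N *v (s * y))"
  proof (rule linear_injective_0[THEN iffD2, OF lin], intro allI impI)
    fix w assume "w - N *v (s * w) = 0"
    then have "(1 - mat_inf_norm N) * vec_inf_norm w \<le> 0"
      using vec_inf_norm_fixed_point_le[of w N s 0] s by simp
    then show "w = 0"
      using c vec_inf_norm_nonneg[of w] vec_inf_norm_eq_0_iff[of w]
      by (simp add: mult_le_0_iff)
  qed
qed simp

lemma fixed_point_pos:
  assumes y: "y = N *v (s * y) + q" and s: "\<And>i. \<bar>s $ i\<bar> \<le> 1"
    and c: "mat_inf_norm N < 1"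
    and m: "\<And>i. m \<le> q $ i" and margin: "mat_inf_norm N * vec_inf_norm q < (1 - mat_inf_norm N) * m"
  shows "0 < y $ i"
proof -
  define c where "c = mat_inf_norm N"
  have "m - c * vec_inf_norm y \<le> y $ i"
    using arg_cong[OF y, of "\<lambda>v. v $ i"] m[of i] abs_component_le_vec_inf_norm[of "N *v (s * y)" i]
      vec_inf_norm_mat_vec_mult_le[OF s, of N y]
    by (simp add: c_def abs_le_iff)
  then have "(1 - c) * m - c * ((1 - c) * vec_inf_norm y) \<le> (1 - c) * y $ i"
    using mult_left_mono[of _ _ "1 - c"] c by (fastforce simp: c_def algebra_simps)
  moreover have "c * ((1 - c) * vec_inf_norm y) \<le> c * vec_inf_norm q"
    using vec_inf_norm_fixed_point_le[OF y s] mat_inf_norm_nonneg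
    unfolding c_def by (rule mult_left_mono)
  ultimately have "0 < (1 - c) * y $ i" using margin by (simp add: c_def)
  then show ?thesis using c by (simp add: c_def zero_less_mult_iff)
qed

lemma vec_abs_sign_mult:
  assumes "\<And>i. s $ i \<in> {1, -1}" and "\<And>i. 0 < y $ i"
  shows "vec_abs (s * y) = y"
proof -
  have "\<bar>s $ i * y $ i\<bar> = y $ i" for i
    using assms(1)[of i] assms(2)[of i] by auto
  then show ?thesis by (simp add: vec_abs_def vec_eq_iff)
qed

lemma sign_pattern_solution:
  fixes A B :: "real^'n^'m" and P :: "real^'m^'n"
  assumes BP: "B ** P = mat 1" and h: "B *v h = 0"
    and y: "y = (P ** A) *v (s * y) + (t *\<^sub>R h - P *v b)"
    and s: "\<And>i. s $ i \<in> {1, -1}" and pos: "\<And>i. 0 < y $ i"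
  shows "A *v (s * y) - B *v vec_abs (s * y) = b \<and> (\<forall>i. sgn ((s * y) $ i) = s $ i)"
proof
  have "B *v y = (B ** P ** A) *v (s * y) + t *\<^sub>R (B *v h) - (B ** P) *v b"
    by (subst y) (simp add: matrix_vector_right_distrib matrix_vector_mult_diff_distrib
        matrix_vector_mult_scaleR matrix_vector_mul_assoc matrix_mul_assoc)
  also have "\<dots> = A *v (s * y) - b" using BP h by simp
  finally show "A *v (s * y) - B *v vec_abs (s * y) = b"
    using vec_abs_sign_mult[OF s pos] by simp
  have "sgn (s $ i * y $ i) = s $ i" for i
    using s[of i] pos[of i] by auto
  then show "\<forall>i. sgn ((s * y) $ i) = s $ i" by simp
qed

lemma infinite_sign_pattern_solutions:
  fixes A B :: "real^'n^'m" and P :: "real^'m^'n"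
  assumes BP: "B ** P = mat 1" and h: "B *v h = 0" "h \<noteq> 0"
    and s: "\<And>i. s $ i \<in> {1, -1}"
    and c: "mat_inf_norm (P ** A) < 1"
    and m: "\<And>i. m \<le> - (P *v b) $ i"
    and margin: "mat_inf_norm (P ** A) * vec_inf_norm (P *v b) < (1 - mat_inf_norm (P ** A)) * m"
  shows "infinite {x. A *v x - B *v vec_abs x = b \<and> (\<forall>i. sgn (x $ i) = s $ i)}"
proof -
  define N where "N = P ** A"
  define p where "p = P *v b"
  define f where "f y = y - N *v (s * y)" for y
  define Y where "Y t = inv f (t *\<^sub>R h - p)" for t
  define T where "T = {0 <..< ((1 - mat_inf_norm N) * m - mat_inf_norm N * vec_inf_norm p) / vec_inf_norm h}"
  have s_le_1: "\<bar>s $ i\<bar> \<le> 1" for i using s[of i] by auto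
  have fY: "Y t - N *v (s * Y t) = t *\<^sub>R h - p" for t
    using surj_f_inv_f[OF surj_id_minus_contraction[OF c[folded N_def] s_le_1]]
    by (simp add: Y_def f_def[abs_def])
  then have Y: "Y t = N *v (s * Y t) + (t *\<^sub>R h - p)" for t
    by (metis diff_add_cancel add.commute)
  have Y_pos: "0 < Y t $ i" if "t \<in> T" for t i
  proof (rule fixed_point_pos[OF Y s_le_1 c[folded N_def]])
    have t: "0 < t" "t * vec_inf_norm h < (1 - mat_inf_norm N) * m - mat_inf_norm N * vec_inf_norm p"
      using that vec_inf_norm_pos[OF h(2)] by (auto simp: T_def pos_less_divide_eq)
    show "m - t * vec_inf_norm h \<le> (t *\<^sub>R h - p) $ i" for i
    proof -
      have "t * (- h $ i) \<le> t * vec_inf_norm h"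
        using abs_component_le_vec_inf_norm[of h i] t(1) by (intro mult_left_mono) auto
      then show ?thesis using m[of i] by (simp add: p_def)
    qed
    have "vec_inf_norm (t *\<^sub>R h - p) \<le> t * vec_inf_norm h + vec_inf_norm p"
    proof (rule vec_inf_norm_le)
      fix i
      have "\<bar>t * h $ i\<bar> \<le> t * vec_inf_norm h"
        using abs_component_le_vec_inf_norm[of h i] t(1) by (simp add: abs_mult)
      then show "\<bar>(t *\<^sub>R h - p) $ i\<bar> \<le> t * vec_inf_norm h + vec_inf_norm p"
        using abs_component_le_vec_inf_norm[of p i] by simp
    qed
    then have "mat_inf_norm N * vec_inf_norm (t *\<^sub>R h - p)
        \<le> mat_inf_norm N * (t * vec_inf_norm h + vec_inf_norm p)"
      using mat_inf_norm_nonneg by (rule mult_left_mono)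
    then show "mat_inf_norm N * vec_inf_norm (t *\<^sub>R h - p)
        < (1 - mat_inf_norm N) * (m - t * vec_inf_norm h)"
      using t(2) by (simp add: algebra_simps)
  qed
  have "(\<lambda>t. s * Y t) ` T \<subseteq> {x. A *v x - B *v vec_abs x = b \<and> (\<forall>i. sgn (x $ i) = s $ i)}"
    using sign_pattern_solution[OF BP h(1) Y[unfolded N_def p_def] s] Y_pos by blast
  moreover have "inj_on (\<lambda>t. s * Y t) T"
  proof (rule inj_onI)
    fix t t' assume "t \<in> T" "t' \<in> T" "s * Y t = s * Y t'"
    have "Y t = vec_abs (s * Y t)"
      using vec_abs_sign_mult[OF s Y_pos[OF \<open>t \<in> T\<close>]] by simp
    also have "\<dots> = Y t'"
      using \<open>s * Y t = s * Y t'\<close> vec_abs_sign_mult[OF s Y_pos[OF \<open>t' \<in> T\<close>]] by simp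
    finally have "t *\<^sub>R h - p = t' *\<^sub>R h - p" using fY by metis
    then show "t = t'" using h(2) by auto
  qed
  moreover have "infinite T"
    using margin c vec_inf_norm_pos[OF h(2)] by (simp add: T_def N_def p_def)
  ultimately show ?thesis by (meson finite_imageD finite_subset)
qed

lemma Min_abs_component_bounds:
  fixes p :: "real^'n"
  assumes neg: "\<And>i. p $ i < 0"
  shows "0 < Min (range (\<lambda>i. \<bar>p $ i\<bar>))"
    and "Min (range (\<lambda>i. \<bar>p $ i\<bar>)) \<le> - p $ i"
    and "Min (range (\<lambda>i. \<bar>p $ i\<bar>)) \<le> vec_inf_norm p"
proof -
  have "Min (range (\<lambda>i. \<bar>p $ i\<bar>)) \<in> range (\<lambda>i. \<bar>p $ i\<bar>)" by (rule Min_in) auto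
  then obtain i0 where i0: "Min (range (\<lambda>i. \<bar>p $ i\<bar>)) = \<bar>p $ i0\<bar>" by blast
  then show "0 < Min (range (\<lambda>i. \<bar>p $ i\<bar>))" using neg[of i0] by simp
  show "Min (range (\<lambda>i. \<bar>p $ i\<bar>)) \<le> vec_inf_norm p"
    using i0 abs_component_le_vec_inf_norm[of p i0] by simp
  have "Min (range (\<lambda>i. \<bar>p $ i\<bar>)) \<le> \<bar>p $ i\<bar>" by (rule Min_le) auto
  then show "Min (range (\<lambda>i. \<bar>p $ i\<bar>)) \<le> - p $ i" using neg[of i] by simp
qed

lemma margin_of_less_half_ratio:
  fixes c m M :: real
  assumes "0 \<le> c" and "0 < m" and "m \<le> M" and "c < m / M / 2"
  shows "c < 1" and "c * M < (1 - c) * m"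
proof -
  have twice: "2 * c * M < m" using assms by (simp add: field_simps)
  moreover have "c * m \<le> c * M" using assms(3,1) by (rule mult_left_mono)
  ultimately show "c * M < (1 - c) * m" by (simp add: algebra_simps)
  have "c * m < 1 * m" using \<open>c * m \<le> c * M\<close> twice assms(2) by linarith
  then show "c < 1" using assms(2) by (rule mult_right_less_imp_less[OF _ less_imp_le])
qed

theorem corollary3p3:
  fixes A B :: "real^'n^'m" and b :: "real^'m" and \<gamma> :: real
  assumes rankB: "rank B = CARD('m)"
    and mn: "CARD('m) < CARD('n)"
    and neg: "\<forall>i. (pinv B *v b) $ i < 0"
    and gamma: "\<gamma> = Min (range (\<lambda>i. \<bar>(pinv B *v b) $ i\<bar>)) / Max (range (\<lambda>i. \<bar>(pinv B *v b) $ i\<bar>))"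
    and small: "mat_inf_norm (pinv B ** A) < \<gamma> / 2"
  shows "\<forall>s :: real^'n. (\<forall>i. s $ i \<in> {1, -1}) \<longrightarrow>
           infinite {x :: real^'n. A *v x - B *v vec_abs x = b \<and> (\<forall>i. sgn (x $ i) = s $ i)}"
proof (intro allI impI)
  fix s :: "real^'n"
  assume s: "\<forall>i. s $ i \<in> {1, -1}"
  define p where "p = pinv B *v b"
  define m where "m = Min (range (\<lambda>i. \<bar>p $ i\<bar>))"
  have "p $ i < 0" for i using neg by (simp add: p_def)
  note m_bounds = Min_abs_component_bounds[of p, OF this, folded m_def]
  obtain h where h: "B *v h = 0" "h \<noteq> 0"
    using matrix_nonfull_linear_equations_eq[of B] rankB mn by auto
  have "mat_inf_norm (pinv B ** A) < m / vec_inf_norm p / 2"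
    using small gamma by (simp add: m_def p_def vec_inf_norm_def)
  note margin = margin_of_less_half_ratio[OF mat_inf_norm_nonneg m_bounds(1,3) this]
  show "infinite {x. A *v x - B *v vec_abs x = b \<and> (\<forall>i. sgn (x $ i) = s $ i)}"
    using infinite_sign_pattern_solutions[OF pinv_right_inverse[OF rankB] h, of s A m b]
      s m_bounds(2) margin by (simp add: p_def)
qed

end
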